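(* Consider the Gaussian crossed effect model with $K=2$, $L=1$ and balanced levels, and suppose that the number of edges of $G_{\boldsymbol{Q}}$ is at least $c_1N$ and at most $c_2 N$ for constants $0<c_1\le c_2$. Then for every ordering of the $M=p+1$ scalar variables in $\boldsymbol{\theta}$, $\mathrm{Cost(SLA)}\ge c\,N\bar n$, where $c>0$ depends only on $c_1$.
   Context: Model: observations $y_j\sim\mathcal{N}(a^{(0)}+a^{(1)}_{i_1[j]}+a^{(2)}_{i_2[j]},\tau^{-1})$, $j=1,\dots,N$, with $a^{(k)}_i\sim\mathcal{N}(0,\tau_k^{-1})$ for $i=1,\dots,I_k$, $k=1,2$, and $a^{(0)}\sim\mathcal{N}(\mu_{pr},T_{pr}^{-1})$; $\boldsymbol{\theta}=(a^{(0)},\boldsymbol{a}^{(1)},\boldsymbol{a}^{(2)})$ has $M=1+p$ entries, $p=I_1+I_2$. Counts $n^{(k)}_i=\#\{j: i_k[j]=i\}$, $n^{(1,2)}_{ij}=\#\{n: i_1[n]=i,i_2[n]=j\}$. The posterior precision $\boldsymbol{Q}$ has entries $\boldsymbol{Q}[a^{(0)},a^{(0)}]=T_{pr}+N\tau$, $\boldsymbol{Q}[a^{(0)},a^{(k)}_i]=n^{(k)}_i\tau$, $\boldsymbol{Q}[a^{(k)}_i,a^{(k)}_i]=\tau_k+n^{(k)}_i\tau$, $\boldsymbol{Q}[a^{(1)}_i,a^{(2)}_j]=n^{(1,2)}_{ij}\tau$, and all other entries zero. $G_{\boldsymbol{Q}}$ is the graph on the variables with an edge iff the corresponding off-diagonal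 entry of $\boldsymbol{Q}$ is nonzero. Balanced levels: $n^{(k)}_i=N/I_k$ for all $k,i$. $\bar n=2N/p$. $\mathrm{Cost(SLA)}$ is the number of floating point operations to compute the Cholesky factor of $\boldsymbol{Q}$ (in the given ordering) by the column recursion $L_{mm}^2=Q_{mm}-\sum_{\ell<m}L_{m\ell}^2$, $L_{jm}=(Q_{jm}-\sum_{\ell<m}L_{j\ell}L_{m\ell})/L_{mm}$ ($j>m$), computing only entries in the potential nonzero pattern (entries $(j,m)$, $j\ge m$, such that $j=m$ or some path from $m$ to $j$ in $G_{\boldsymbol{Q}}$ has all intermediate vertices preceding $m$) and skipping operations with structurally zero entries. *)

theory Defs
  imports Complex_Main
begin

text \<open>Scalar variables of theta: the global intercept a0, the level effects a1_i (i < I1)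
  and a2_i (i < I2). Levels are indexed from 0.\<close>
datatype var = A0 | A1 nat | A2 nat

definition vars :: "nat \<Rightarrow> nat \<Rightarrow> var set" where
  "vars I1 I2 = {A0} \<union> A1 ` {..<I1} \<union> A2 ` {..<I2}"

text \<open>Observations j < N with level assignments i1 j, i2 j.\<close>
definition cnt1 :: "nat \<Rightarrow> (nat \<Rightarrow> nat) \<Rightarrow> nat \<Rightarrow> nat" where
  "cnt1 N i1 i = card {j. j < N \<and> i1 j = i}"

definition cnt12 :: "nat \<Rightarrow> (nat \<Rightarrow> nat) \<Rightarrow> (nat \<Rightarrow> nat) \<Rightarrow> nat \<Rightarrow> nat \<Rightarrow> nat" where
  "cnt12 N i1 i2 i i' = card {j. j < N \<and> i1 j = i \<and> i2 j = i'}"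

fun precQ :: "nat \<Rightarrow> (nat \<Rightarrow> nat) \<Rightarrow> (nat \<Rightarrow> nat) \<Rightarrow> real \<Rightarrow> real \<Rightarrow> real \<Rightarrow> real
              \<Rightarrow> var \<Rightarrow> var \<Rightarrow> real" where
  "precQ N i1 i2 tau tau1 tau2 Tpr A0 A0 = Tpr + real N * tau"
| "precQ N i1 i2 tau tau1 tau2 Tpr A0 (A1 i) = real (cnt1 N i1 i) * tau"
| "precQ N i1 i2 tau tau1 tau2 Tpr A0 (A2 i) = real (cnt1 N i2 i) * tau"
| "precQ N i1 i2 tau tau1 tau2 Tpr (A1 i) A0 = real (cnt1 N i1 i) * tau"
| "precQ N i1 i2 tau tau1 tau2 Tpr (A2 i) A0 = real (cnt1 N i2 i) * tau"
| "precQ N i1 i2 tau tau1 tau2 Tpr (A1 i) (A1 i') =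
     (if i = i' then tau1 + real (cnt1 N i1 i) * tau else 0)"
| "precQ N i1 i2 tau tau1 tau2 Tpr (A2 i) (A2 i') =
     (if i = i' then tau2 + real (cnt1 N i2 i) * tau else 0)"
| "precQ N i1 i2 tau tau1 tau2 Tpr (A1 i) (A2 i') = real (cnt12 N i1 i2 i i') * tau"
| "precQ N i1 i2 tau tau1 tau2 Tpr (A2 i') (A1 i) = real (cnt12 N i1 i2 i i') * tau"

definition num_edges :: "var set \<Rightarrow> (var \<Rightarrow> var \<Rightarrow> real) \<Rightarrow> nat" where
  "num_edges V Q = card {{u, v} | u v. u \<in> V \<and> v \<in> V \<and> u \<noteq> v \<and> Q u v \<noteq> 0}"

definition adjpos :: "var list \<Rightarrow> (var \<Rightarrow> var \<Rightarrow> real) \<Rightarrow> nat \<Rightarrow> nat \<Rightarrow> bool" where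
  "adjpos xs Q a b \<longleftrightarrow> a < length xs \<and> b < length xs \<and> a \<noteq> b \<and> Q (xs ! a) (xs ! b) \<noteq> 0"

text \<open>Potential nonzero pattern of the Cholesky factor: (j, m) with j \<ge> m such that j = m or
  some path from m to j in G_Q has all intermediate vertices preceding m.\<close>
definition fillpat :: "var list \<Rightarrow> (var \<Rightarrow> var \<Rightarrow> real) \<Rightarrow> nat \<Rightarrow> nat \<Rightarrow> bool" where
  "fillpat xs Q j m \<longleftrightarrow> m \<le> j \<and> j < length xs \<and>
     (j = m \<or> (\<exists>ps. (\<forall>q \<in> set ps. q < m) \<and> successively (adjpos xs Q) (m # ps @ [j])))"

text \<open>Flop count of the column Cholesky recursion restricted to the pattern:
  diagonal entry m: one multiply and one subtract per l < m with L_ml in the pattern, plus a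
  square root; off-diagonal entry (j,m): one multiply and one subtract per l < m with both
  L_jl and L_ml in the pattern, plus a division.\<close>
definition cost_SLA :: "var list \<Rightarrow> (var \<Rightarrow> var \<Rightarrow> real) \<Rightarrow> nat" where
  "cost_SLA xs Q = (\<Sum>m < length xs.
       (1 + 2 * card {l. l < m \<and> fillpat xs Q m l})
     + (\<Sum>j \<in> {j. m < j \<and> fillpat xs Q j m}.
          1 + 2 * card {l. l < m \<and> fillpat xs Q j l \<and> fillpat xs Q m l}))"

end

theory Submission
  imports Defs "HOL-Analysis.Convex"
begin

text \<open>Let \<open>d\<^sub>l\<close> be the number of neighbours of the variable in position \<open>l\<close> that come later in
  the ordering. Any two of them, \<open>m < j\<close>, are joined by the path \<open>m, l, j\<close> through the earlier
  vertex \<open>l\<close>, so \<open>(j, m)\<close> lies in the fill pattern and the update of \<open>L\<^sub>j\<^sub>m\<close> contains the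
  term \<open>L\<^sub>j\<^sub>l L\<^sub>m\<^sub>l\<close>. Counting these updates gives \<open>Cost(SLA) \<ge> \<Sum>\<^sub>l d\<^sub>l\<^sup>2\<close>, whereas
  \<open>\<Sum>\<^sub>l d\<^sub>l\<close> is the number of edges. By Cauchy-Schwarz, \<open>Cost(SLA) \<ge> |E|\<^sup>2 / M \<ge> c\<^sub>1\<^sup>2 N\<^sup>2 / M\<close>,
  and \<open>M = p + 1 \<le> 2p\<close>.\<close>

lemma precQ_sym: "precQ N i1 i2 tau tau1 tau2 Tpr u v = precQ N i1 i2 tau tau1 tau2 Tpr v u"
  by (cases u; cases v) auto

definition later_nbrs :: "var list \<Rightarrow> (var \<Rightarrow> var \<Rightarrow> real) \<Rightarrow> nat \<Rightarrow> nat set" where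
  "later_nbrs xs Q l = {j. l < j \<and> adjpos xs Q l j}"

lemma later_nbrs_subset: "later_nbrs xs Q l \<subseteq> {..<length xs}"
  by (auto simp: later_nbrs_def adjpos_def)

lemma finite_later_nbrs [simp]: "finite (later_nbrs xs Q l)"
  by (rule finite_subset[OF later_nbrs_subset]) simp

lemma card_less_pairs:
  fixes S :: "'a::linorder set"
  assumes "finite S"
  shows "2 * card {(m, j). m \<in> S \<and> j \<in> S \<and> m < j} + card S = card S * card S"
proof -
  define A where "A = {(m, j). m \<in> S \<and> j \<in> S \<and> m < j}"
  define B where "B = {(m, j). m \<in> S \<and> j \<in> S \<and> j < m}"
  define C where "C = {(m, j). m \<in> S \<and> j \<in> S \<and> m = j}"
  have fin_SS: "finite (S \<times> S)" using assms by simp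
  have fin: "finite A" "finite B" "finite C"
    by (rule finite_subset[OF _ fin_SS], auto simp: A_def B_def C_def)+
  have "B = prod.swap ` A" by (auto simp: A_def B_def image_iff)
  then have card_B: "card B = card A" by (simp add: card_image)
  have "C = (\<lambda>x. (x, x)) ` S" by (auto simp: C_def)
  then have card_C: "card C = card S" by (simp add: card_image inj_on_def)
  have "S \<times> S = (A \<union> B) \<union> C" by (auto simp: A_def B_def C_def)
  then have "card (S \<times> S) = card (A \<union> B) + card C"
    by (simp only:) (rule card_Un_disjoint; use fin in \<open>auto simp: A_def B_def C_def\<close>)
  also have "card (A \<union> B) = card A + card B"
    by (rule card_Un_disjoint) (use fin in \<open>auto simp: A_def B_def\<close>)
  finally have "card S * card S = card A + card B + card C"
    by (simp add: card_cartesian_product)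
  then show ?thesis using card_B card_C unfolding A_def by linarith
qed

lemma fillpat_less_length: "fillpat xs Q j m \<Longrightarrow> j < length xs"
  by (simp add: fillpat_def)

lemma fillpat_if_adjpos:
  assumes "adjpos xs Q m j" "m < j"
  shows "fillpat xs Q j m"
  using assms unfolding fillpat_def adjpos_def
  by (intro conjI disjI2 exI[of _ "[]"]) auto

lemma fillpat_through_earlier_vertex:
  assumes sym: "\<And>u v. Q u v = Q v u"
    and "adjpos xs Q l m" "adjpos xs Q l j" "l < m" "m \<le> j"
  shows "fillpat xs Q j m"
proof -
  have "adjpos xs Q m l" using assms(2) sym[of "xs ! l" "xs ! m"] by (auto simp: adjpos_def)
  then have "successively (adjpos xs Q) (m # [l] @ [j])" using assms(3) by simp
  with assms(3-5) show ?thesis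
    unfolding fillpat_def by (intro conjI disjI2 exI[of _ "[l]"]) (auto simp: adjpos_def)
qed

lemma card_later_nbrs_le_column_fill:
  "card (later_nbrs xs Q m) \<le> card {j. m < j \<and> fillpat xs Q j m}"
proof (rule card_mono)
  show "finite {j. m < j \<and> fillpat xs Q j m}"
    by (rule finite_subset[of _ "{..<length xs}"]) (auto dest: fillpat_less_length)
  show "later_nbrs xs Q m \<subseteq> {j. m < j \<and> fillpat xs Q j m}"
    by (auto simp: later_nbrs_def fillpat_if_adjpos)
qed

lemma sum_later_pairs_le_updates:
  fixes xs :: "var list" and Q :: "var \<Rightarrow> var \<Rightarrow> real"
  assumes sym: "\<And>u v. Q u v = Q v u"
  defines "n \<equiv> length xs"
  shows "(\<Sum>l<n. card {(m, j). m \<in> later_nbrs xs Q l \<and> j \<in> later_nbrs xs Q l \<and> m < j})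
    \<le> (\<Sum>m<n. \<Sum>j\<in>{j. m < j \<and> fillpat xs Q j m}.
          card {l. l < m \<and> fillpat xs Q j l \<and> fillpat xs Q m l})"
    (is "(\<Sum>l<n. card (?P l)) \<le> (\<Sum>m<n. \<Sum>j\<in>?F m. card (?X m j))")
proof -
  have fin_F: "finite (?F m)" for m
    by (rule finite_subset[of _ "{..<n}"]) (auto simp: n_def dest: fillpat_less_length)
  have fin_X: "finite (?X m j)" for m j
    by (rule finite_subset[of _ "{..<m}"]) auto
  have fin_P: "finite (?P l)" for l
    by (rule finite_subset[of _ "later_nbrs xs Q l \<times> later_nbrs xs Q l"]) auto
  define f where "f = (\<lambda>(l::nat, (m::nat, j::nat)). (m, (j, l)))"
  have "f ` Sigma {..<n} ?P \<subseteq> Sigma {..<n} (\<lambda>m. Sigma (?F m) (?X m))"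
  proof
    fix t assume "t \<in> f ` Sigma {..<n} ?P"
    then obtain l m j where t: "t = (m, j, l)" and "m < j"
      and lm: "l < m" "adjpos xs Q l m" and lj: "l < j" "adjpos xs Q l j"
      by (auto simp: f_def later_nbrs_def)
    then have "fillpat xs Q j m"
      by (intro fillpat_through_earlier_vertex[OF sym lm(2) lj(2)]) simp_all
    moreover have "m < n" using lm(2) by (simp add: adjpos_def n_def)
    ultimately show "t \<in> Sigma {..<n} (\<lambda>m. Sigma (?F m) (?X m))"
      using t lm lj \<open>m < j\<close> fillpat_if_adjpos by blast
  qed
  moreover have "inj_on f (Sigma {..<n} ?P)" by (auto simp: inj_on_def f_def)
  ultimately have "card (Sigma {..<n} ?P) \<le> card (Sigma {..<n} (\<lambda>m. Sigma (?F m) (?X m)))"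
    by (intro card_inj_on_le) (auto simp: fin_F fin_X)
  then show ?thesis
    by (simp add: card_SigmaI fin_P fin_F fin_X finite_SigmaI)
qed

lemma sum_square_card_later_nbrs_le_cost:
  assumes sym: "\<And>u v. Q u v = Q v u"
  shows "(\<Sum>l<length xs. card (later_nbrs xs Q l) ^ 2) \<le> cost_SLA xs Q"
proof -
  define n where "n = length xs"
  define D where "D = later_nbrs xs Q"
  define F where "F m = {j. m < j \<and> fillpat xs Q j m}" for m
  define X where "X m j = {l. l < m \<and> fillpat xs Q j l \<and> fillpat xs Q m l}" for m j
  define P where "P l = {(m, j). m \<in> D l \<and> j \<in> D l \<and> m < j}" for l
  have "(\<Sum>l<n. card (D l) ^ 2) = 2 * (\<Sum>l<n. card (P l)) + (\<Sum>l<n. card (D l))"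
    by (simp add: P_def D_def power2_eq_square card_less_pairs[symmetric]
                  sum.distrib sum_distrib_left)
  also have "\<dots> \<le> 2 * (\<Sum>m<n. \<Sum>j\<in>F m. card (X m j)) + (\<Sum>m<n. card (F m))"
    using sum_later_pairs_le_updates[OF sym] card_later_nbrs_le_column_fill
    by (intro add_mono sum_mono) (auto simp: n_def D_def P_def F_def X_def)
  also have "\<dots> = (\<Sum>m<n. \<Sum>j\<in>F m. 1 + 2 * card (X m j))"
    by (simp only: sum.distrib sum_distrib_left card_eq_sum)
  also have "\<dots> \<le> cost_SLA xs Q"
    unfolding cost_SLA_def F_def X_def n_def by (intro sum_mono) simp
  finally show ?thesis by (simp add: n_def D_def)
qed

lemma num_edges_le_sum_card_later_nbrs:
  assumes sym: "\<And>u v. Q u v = Q v u" and set_xs: "set xs = V"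
  shows "num_edges V Q \<le> (\<Sum>l<length xs. card (later_nbrs xs Q l))"
proof -
  define E where "E = {{u, v} | u v. u \<in> V \<and> v \<in> V \<and> u \<noteq> v \<and> Q u v \<noteq> 0}"
  define g where "g = (\<lambda>(a, b). {xs ! a, xs ! b})"
  have E_subset: "E \<subseteq> g ` Sigma {..<length xs} (later_nbrs xs Q)"
  proof
    fix e assume "e \<in> E"
    then obtain u v where e: "e = {u, v}" and uv: "u \<in> V" "v \<in> V" "u \<noteq> v" "Q u v \<noteq> 0"
      by (auto simp: E_def)
    obtain a where a: "a < length xs" "xs ! a = u" using uv set_xs by (metis in_set_conv_nth)
    obtain b where b: "b < length xs" "xs ! b = v" using uv set_xs by (metis in_set_conv_nth)
    have "a \<noteq> b" using uv(3) a(2) b(2) by blast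
    then consider "a < b" | "b < a" by linarith
    then show "e \<in> g ` Sigma {..<length xs} (later_nbrs xs Q)"
    proof cases
      case 1
      then have "(a, b) \<in> Sigma {..<length xs} (later_nbrs xs Q)"
        using a b uv(4) by (simp add: later_nbrs_def adjpos_def)
      then show ?thesis using e a(2) b(2) by (intro image_eqI[of e g "(a, b)"]) (simp_all add: g_def)
    next
      case 2
      then have "(b, a) \<in> Sigma {..<length xs} (later_nbrs xs Q)"
        using a b uv(4) sym[of u v] by (simp add: later_nbrs_def adjpos_def)
      then show ?thesis
        using e a(2) b(2) by (intro image_eqI[of e g "(b, a)"]) (simp_all add: g_def insert_commute)
    qed
  qed
  have "num_edges V Q = card E" by (simp only: num_edges_def E_def)
  also have "\<dots> \<le> card (g ` Sigma {..<length xs} (later_nbrs xs Q))"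
    using E_subset by (intro card_mono finite_imageI) simp_all
  also have "\<dots> \<le> card (Sigma {..<length xs} (later_nbrs xs Q))"
    by (rule card_image_le) simp
  also have "\<dots> = (\<Sum>l<length xs. card (later_nbrs xs Q l))"
    by (simp add: card_SigmaI)
  finally show ?thesis .
qed

theorem num_edges_squared_le_length_mul_cost:
  assumes sym: "\<And>u v. Q u v = Q v u" and set_xs: "set xs = V"
  shows "real (num_edges V Q) ^ 2 \<le> real (length xs) * real (cost_SLA xs Q)"
proof -
  define d where "d l = real (card (later_nbrs xs Q l))" for l
  have "real (num_edges V Q) ^ 2 \<le> (\<Sum>l<length xs. d l) ^ 2"
    using num_edges_le_sum_card_later_nbrs[OF sym set_xs]
    by (intro power_mono) (auto simp: d_def simp flip: of_nat_sum)
  also have "\<dots> \<le> real (length xs) * (\<Sum>l<length xs. d l ^ 2)"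
    using Cauchy_Schwarz_ineq_sum[of d "\<lambda>_. 1" "{..<length xs}"] by (simp add: mult.commute)
  also have "\<dots> \<le> real (length xs) * real (cost_SLA xs Q)"
    using sum_square_card_later_nbrs_le_cost[OF sym, of xs]
    by (intro mult_left_mono) (auto simp: d_def simp flip: of_nat_sum of_nat_power)
  finally show ?thesis .
qed

lemma card_vars_le: "card (vars I1 I2) \<le> 1 + I1 + I2"
proof -
  have "card (vars I1 I2) \<le> card {A0} + card (A1 ` {..<I1}) + card (A2 ` {..<I2})"
    unfolding vars_def by (metis add_le_mono1 card_Un_le le_trans)
  also have "\<dots> \<le> 1 + I1 + I2"
    using card_image_le[of "{..<I1}" A1] card_image_le[of "{..<I2}" A2] by simp
  finally show ?thesis .
qed

theorem proposition2:
  fixes c1 :: real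
  assumes "0 < c1"
  shows "\<exists>c > 0. \<forall>(c2::real) (N::nat) (I1::nat) (I2::nat) (i1::nat \<Rightarrow> nat) (i2::nat \<Rightarrow> nat)
            (tau::real) (tau1::real) (tau2::real) (Tpr::real) (xs::var list).
     c1 \<le> c2 \<and> 0 < I1 \<and> 0 < I2 \<and>
     (\<forall>j < N. i1 j < I1 \<and> i2 j < I2) \<and>
     (\<forall>i < I1. real (cnt1 N i1 i) = real N / real I1) \<and>
     (\<forall>i < I2. real (cnt1 N i2 i) = real N / real I2) \<and>
     0 < tau \<and> 0 < tau1 \<and> 0 < tau2 \<and> 0 < Tpr \<and>
     c1 * real N \<le> real (num_edges (vars I1 I2) (precQ N i1 i2 tau tau1 tau2 Tpr)) \<and>
     real (num_edges (vars I1 I2) (precQ N i1 i2 tau tau1 tau2 Tpr)) \<le> c2 * real N \<and>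
     distinct xs \<and> set xs = vars I1 I2
     \<longrightarrow> c * real N * (2 * real N / real (I1 + I2))
           \<le> real (cost_SLA xs (precQ N i1 i2 tau tau1 tau2 Tpr))"
proof (intro exI[of _ "c1^2/4"] conjI allI impI)
  show "0 < c1^2/4" using assms by simp
next
  fix c2 :: real and N I1 I2 :: nat and i1 i2 :: "nat \<Rightarrow> nat" and tau tau1 tau2 Tpr :: real
    and xs :: "var list"
  define Q where "Q = precQ N i1 i2 tau tau1 tau2 Tpr"
  define p where "p = real (I1 + I2)"
  assume "c1 \<le> c2 \<and> 0 < I1 \<and> 0 < I2 \<and> (\<forall>j < N. i1 j < I1 \<and> i2 j < I2) \<and>
     (\<forall>i < I1. real (cnt1 N i1 i) = real N / real I1) \<and>
     (\<forall>i < I2. real (cnt1 N i2 i) = real N / real I2) \<and>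
     0 < tau \<and> 0 < tau1 \<and> 0 < tau2 \<and> 0 < Tpr \<and>
     c1 * real N \<le> real (num_edges (vars I1 I2) Q) \<and>
     real (num_edges (vars I1 I2) Q) \<le> c2 * real N \<and> distinct xs \<and> set xs = vars I1 I2"
  then have I1_pos: "0 < I1" and edges: "c1 * real N \<le> real (num_edges (vars I1 I2) Q)"
    and distinct: "distinct xs" and set_xs: "set xs = vars I1 I2"
    unfolding Q_def by blast+
  have "length xs \<le> 1 + I1 + I2"
    using card_vars_le distinct_card[OF distinct] set_xs by metis
  then have length_le: "real (length xs) \<le> 2 * p" using I1_pos by (simp add: p_def)
  have "(c1 * real N) ^ 2 \<le> real (num_edges (vars I1 I2) Q) ^ 2"
    using edges assms by (intro power_mono) auto
  also have "\<dots> \<le> real (length xs) * real (cost_SLA xs Q)"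
    using num_edges_squared_le_length_mul_cost[OF precQ_sym set_xs] by (simp add: Q_def)
  also have "\<dots> \<le> 2 * p * real (cost_SLA xs Q)"
    using length_le by (intro mult_right_mono) auto
  finally show "c1^2/4 * real N * (2 * real N / real (I1 + I2)) \<le> real (cost_SLA xs Q)"
    using I1_pos by (simp add: p_def field_simps power2_eq_square)
qed

end
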